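(* Let $\gamma>1$ and let $(v,\tau,p)$ be a $C^2$ solution with $\tau>0$, $p>0$ of the system $$\partial_t v+v\partial_x v+\tau\partial_x p=0,\qquad \partial_t\tau+v\partial_x\tau-\tau\partial_x v=0,\qquad \partial_t p+v\partial_x p+\gamma p\,\partial_x v=0 .$$ Set $s=\sqrt{\gamma p/\tau}$, $\xi_1=v-\sqrt{\gamma p\tau}$, $\xi_2=v$, $\xi_3=v+\sqrt{\gamma p\tau}$, and $$\mathcal P_1=\partial_x v-\frac{\partial_x p}{s},\qquad \mathcal P_2=s\,\partial_x\tau+\frac{\partial_x p}{s},\qquad \mathcal P_3=\partial_x v+\frac{\partial_x p}{s}.$$ Then $\partial_t\mathcal P_k+\xi_k\partial_x\mathcal P_k=\mathbf F_k(\mathcal P_1,\mathcal P_2,\mathcal P_3)$ for $k=1,2,3$, where $$\mathbf F_1=-\tfrac{\gamma+1}{4}\mathcal P_1^2+\tfrac14\mathcal P_1\mathcal P_2-\tfrac{3-\gamma}{4}\mathcal P_1\mathcal P_3-\tfrac14\mathcal P_2\mathcal P_3,$$ $$\mathbf F_2=-\tfrac{\gamma+1}{4}\mathcal P_2(\mathcal P_1+\mathcal P_3),$$ $$\mathbf F_3=-\tfrac{\gamma+1}{4}\mathcal P_3^2+\tfrac14\mathcal P_1\mathcal P_2-\tfrac{3-\gamma}{4}\mathcal P_1\mathcal P_3-\tfrac14\mathcal P_2\mathcal P_3 .$$ In particular the right-hand sides are quadratic polynomials in $(\mathcal P_1,\mathcal P_2,\mathcal P_3)$ with constant coefficients, independent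 of $(v,\tau,p)$.
   Context: Here $v$ is velocity, $\tau=1/\rho$ is specific volume and $p$ is pressure of a polytropic gas with adiabatic exponent $\gamma$; the system is the 1D non-isentropic Euler system written in these variables. The $\xi_k$ are the eigenvalues of the system's coefficient matrix and $\mathcal P_k=l^k\cdot\partial_x(v,\tau,p)$ with left eigenvectors $l^1=(1,0,-s^{-1})$, $l^2=(0,s,s^{-1})$, $l^3=(1,0,s^{-1})$. *)

theory Defs
  imports "HOL-Analysis.Analysis"
begin

text \<open>Functions of (t,x) are modelled as maps real \<times> real \<Rightarrow> real; the first
coordinate is time t, the second is space x.\<close>

definition dt :: "(real \<times> real \<Rightarrow> real) \<Rightarrow> real \<times> real \<Rightarrow> real" where
  "dt f z = frechet_derivative f (at z) (1, 0)"

definition dx :: "(real \<times> real \<Rightarrow> real) \<Rightarrow> real \<times> real \<Rightarrow> real" where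
  "dx f z = frechet_derivative f (at z) (0, 1)"

definition C2_on :: "(real \<times> real) set \<Rightarrow> (real \<times> real \<Rightarrow> real) \<Rightarrow> bool" where
  "C2_on \<Omega> f \<longleftrightarrow>
     (\<forall>z\<in>\<Omega>. f differentiable (at z)) \<and>
     (\<forall>z\<in>\<Omega>. dt f differentiable (at z) \<and> dx f differentiable (at z)) \<and>
     continuous_on \<Omega> (dt (dt f)) \<and> continuous_on \<Omega> (dx (dt f)) \<and>
     continuous_on \<Omega> (dt (dx f)) \<and> continuous_on \<Omega> (dx (dx f))"

definition sfun :: "real \<Rightarrow> (real \<times> real \<Rightarrow> real) \<Rightarrow> (real \<times> real \<Rightarrow> real) \<Rightarrow> real \<times> real \<Rightarrow> real" where
  "sfun \<gamma> tau p z = sqrt (\<gamma> * p z / tau z)"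

definition P1 where
  "P1 \<gamma> v tau p z = dx v z - dx p z / sfun \<gamma> tau p z"
definition P2 where
  "P2 \<gamma> v tau p z = sfun \<gamma> tau p z * dx tau z + dx p z / sfun \<gamma> tau p z"
definition P3 where
  "P3 \<gamma> v tau p z = dx v z + dx p z / sfun \<gamma> tau p z"

definition xi1 where "xi1 \<gamma> v tau p z = v z - sqrt (\<gamma> * p z * tau z)"
definition xi2 where "xi2 \<gamma> v tau p z = v z"
definition xi3 where "xi3 \<gamma> v tau p z = v z + sqrt (\<gamma> * p z * tau z)"

definition F1 :: "real \<Rightarrow> real \<Rightarrow> real \<Rightarrow> real \<Rightarrow> real" where
  "F1 \<gamma> a b c = - (\<gamma> + 1) / 4 * a^2 + 1/4 * a * b - (3 - \<gamma>) / 4 * a * c - 1/4 * b * c"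
definition F2 :: "real \<Rightarrow> real \<Rightarrow> real \<Rightarrow> real \<Rightarrow> real" where
  "F2 \<gamma> a b c = - (\<gamma> + 1) / 4 * b * (a + c)"
definition F3 :: "real \<Rightarrow> real \<Rightarrow> real \<Rightarrow> real \<Rightarrow> real" where
  "F3 \<gamma> a b c = - (\<gamma> + 1) / 4 * c^2 + 1/4 * a * b - (3 - \<gamma>) / 4 * a * c - 1/4 * b * c"

end

theory Submission
  imports Defs
begin

text \<open>Differentiating \<open>\<P>\<^sub>k\<close> along the \<open>k\<close>-th characteristic produces second derivatives of the
solution. The mixed ones become pure \<open>x\<close>-derivatives by Schwarz's theorem (via the double mean
value theorem) together with the \<open>x\<close>-derivative of the system; all second derivatives then cancel,
and what remains is a rational identity in the first derivatives of \<open>v, \<tau>, p\<close> and \<open>s\<close>, which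
closes because \<open>p = s\<^sup>2\<tau>/\<gamma>\<close> and \<open>\<xi>\<^sub>1\<^sub>,\<^sub>3 = v \<mp> s\<tau>\<close>.\<close>

context
  fixes f g :: "'a::real_normed_vector \<Rightarrow> real" and z :: 'a
  assumes f: "f differentiable (at z)" and g: "g differentiable (at z)"
begin

lemma frechet_derivative_add_at:
  "frechet_derivative (\<lambda>w. f w + g w) (at z) =
     (\<lambda>u. frechet_derivative f (at z) u + frechet_derivative g (at z) u)"
  using f g by (intro frechet_derivative_at[symmetric] derivative_intros) (simp_all add: frechet_derivative_works)

lemma frechet_derivative_diff_at:
  "frechet_derivative (\<lambda>w. f w - g w) (at z) =
     (\<lambda>u. frechet_derivative f (at z) u - frechet_derivative g (at z) u)"
  using f g by (intro frechet_derivative_at[symmetric] derivative_intros) (simp_all add: frechet_derivative_works)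

lemma frechet_derivative_mult_at:
  "frechet_derivative (\<lambda>w. f w * g w) (at z) =
     (\<lambda>u. frechet_derivative f (at z) u * g z + f z * frechet_derivative g (at z) u)"
  using f g by (intro frechet_derivative_at[symmetric]) (auto intro!: derivative_eq_intros simp: frechet_derivative_works)

lemma frechet_derivative_divide_at:
  assumes "g z \<noteq> 0"
  shows "frechet_derivative (\<lambda>w. f w / g w) (at z) =
     (\<lambda>u. (frechet_derivative f (at z) u * g z - f z * frechet_derivative g (at z) u) / (g z)\<^sup>2)"
proof -
  have "((\<lambda>w. f w / g w) has_derivative
      (\<lambda>u. (frechet_derivative f (at z) u * g z - f z * frechet_derivative g (at z) u) / (g z)\<^sup>2)) (at z)"
    using f g assms
    by (auto intro!: derivative_eq_intros simp: frechet_derivative_works field_simps power2_eq_square)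
  then show ?thesis by (rule frechet_derivative_at[symmetric])
qed

end

lemma frechet_derivative_vanishing_on_open:
  assumes "open \<Omega>" "z \<in> \<Omega>" "\<forall>w\<in>\<Omega>. g w = 0"
  shows "frechet_derivative g (at z) = (\<lambda>_. 0)"
proof -
  have "(g has_derivative (\<lambda>_. 0)) (at z)"
    by (rule has_derivative_transform_within_open[OF has_derivative_const assms(1,2)])
      (use assms(3) in auto)
  then show ?thesis by (rule frechet_derivative_at[symmetric])
qed

lemma dt_has_real_derivative:
  fixes f :: "real \<times> real \<Rightarrow> real"
  assumes "f differentiable (at (t, x))"
  shows "((\<lambda>s. f (s, x)) has_real_derivative dt f (t, x)) (at t)"
proof -
  let ?F = "frechet_derivative f (at (t, x))"
  have "((\<lambda>s. (s, x)) has_derivative (\<lambda>h. (h, 0))) (at t)"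
    by (auto intro!: derivative_eq_intros)
  then have "((\<lambda>s. f (s, x)) has_derivative (\<lambda>h. ?F (h, 0))) (at t)"
    using has_derivative_compose frechet_derivative_works assms by fastforce
  moreover have "?F (h, 0) = dt f (t, x) * h" for h
    using linear_cmul[OF linear_frechet_derivative[OF assms], of h "(1, 0)"]
    by (simp add: dt_def)
  ultimately show ?thesis
    by (simp add: has_field_derivative_def)
qed

lemma dx_has_real_derivative:
  fixes f :: "real \<times> real \<Rightarrow> real"
  assumes "f differentiable (at (t, x))"
  shows "((\<lambda>y. f (t, y)) has_real_derivative dx f (t, x)) (at x)"
proof -
  let ?F = "frechet_derivative f (at (t, x))"
  have "((\<lambda>y. (t, y)) has_derivative (\<lambda>h. (0, h))) (at x)"
    by (auto intro!: derivative_eq_intros)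
  then have "((\<lambda>y. f (t, y)) has_derivative (\<lambda>h. ?F (0, h))) (at x)"
    using has_derivative_compose frechet_derivative_works assms by fastforce
  moreover have "?F (0, h) = dx f (t, x) * h" for h
    using linear_cmul[OF linear_frechet_derivative[OF assms], of h "(0, 1)"]
    by (simp add: dx_def)
  ultimately show ?thesis
    by (simp add: has_field_derivative_def)
qed

lemma mixed_difference_dx_dt:
  fixes f :: "real \<times> real \<Rightarrow> real"
  assumes h: "h > 0" and rect: "{t..t+h} \<times> {x..x+h} \<subseteq> \<Omega>"
    and f: "\<forall>w\<in>\<Omega>. f differentiable (at w)" and ft: "\<forall>w\<in>\<Omega>. dt f differentiable (at w)"
  obtains \<sigma> \<eta> where "\<sigma> \<in> {t..t+h}" "\<eta> \<in> {x..x+h}"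
    "f (t+h, x+h) - f (t+h, x) - f (t, x+h) + f (t, x) = h\<^sup>2 * dx (dt f) (\<sigma>, \<eta>)"
proof -
  define g where "g s = f (s, x+h) - f (s, x)" for s
  obtain \<sigma> where \<sigma>: "t < \<sigma>" "\<sigma> < t + h" "g (t+h) - g t = h * (dt f (\<sigma>, x+h) - dt f (\<sigma>, x))"
  proof -
    have "\<exists>\<sigma>. t < \<sigma> \<and> \<sigma> < t + h \<and> g (t+h) - g t = (t + h - t) * (dt f (\<sigma>, x+h) - dt f (\<sigma>, x))"
    proof (rule MVT2)
      fix s assume "t \<le> s" "s \<le> t + h"
      then have "(s, x+h) \<in> \<Omega>" "(s, x) \<in> \<Omega>" using rect h by auto
      then show "(g has_real_derivative dt f (s, x+h) - dt f (s, x)) (at s)"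
        unfolding g_def using f by (auto intro!: derivative_intros dt_has_real_derivative)
    qed (use h in simp)
    then show ?thesis using that by auto
  qed
  have "\<exists>\<eta>. x < \<eta> \<and> \<eta> < x + h \<and> dt f (\<sigma>, x+h) - dt f (\<sigma>, x) = (x + h - x) * dx (dt f) (\<sigma>, \<eta>)"
  proof (rule MVT2)
    fix y assume "x \<le> y" "y \<le> x + h"
    then have "(\<sigma>, y) \<in> \<Omega>" using rect \<sigma> by auto
    then show "((\<lambda>y. dt f (\<sigma>, y)) has_real_derivative dx (dt f) (\<sigma>, y)) (at y)"
      using ft by (auto intro!: dx_has_real_derivative)
  qed (use h in simp)
  then obtain \<eta> where "x < \<eta>" "\<eta> < x + h" "dt f (\<sigma>, x+h) - dt f (\<sigma>, x) = h * dx (dt f) (\<sigma>, \<eta>)"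
    by auto
  with \<sigma> show ?thesis
    using that[of \<sigma> \<eta>] by (auto simp: g_def power2_eq_square algebra_simps)
qed

lemma mixed_difference_dt_dx:
  fixes f :: "real \<times> real \<Rightarrow> real"
  assumes h: "h > 0" and rect: "{t..t+h} \<times> {x..x+h} \<subseteq> \<Omega>"
    and f: "\<forall>w\<in>\<Omega>. f differentiable (at w)" and fx: "\<forall>w\<in>\<Omega>. dx f differentiable (at w)"
  obtains \<sigma> \<eta> where "\<sigma> \<in> {t..t+h}" "\<eta> \<in> {x..x+h}"
    "f (t+h, x+h) - f (t+h, x) - f (t, x+h) + f (t, x) = h\<^sup>2 * dt (dx f) (\<sigma>, \<eta>)"
proof -
  define g where "g y = f (t+h, y) - f (t, y)" for y
  obtain \<eta> where \<eta>: "x < \<eta>" "\<eta> < x + h" "g (x+h) - g x = h * (dx f (t+h, \<eta>) - dx f (t, \<eta>))"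
  proof -
    have "\<exists>\<eta>. x < \<eta> \<and> \<eta> < x + h \<and> g (x+h) - g x = (x + h - x) * (dx f (t+h, \<eta>) - dx f (t, \<eta>))"
    proof (rule MVT2)
      fix y assume "x \<le> y" "y \<le> x + h"
      then have "(t+h, y) \<in> \<Omega>" "(t, y) \<in> \<Omega>" using rect h by auto
      then show "(g has_real_derivative dx f (t+h, y) - dx f (t, y)) (at y)"
        unfolding g_def using f by (auto intro!: derivative_intros dx_has_real_derivative)
    qed (use h in simp)
    then show ?thesis using that by auto
  qed
  have "\<exists>\<sigma>. t < \<sigma> \<and> \<sigma> < t + h \<and> dx f (t+h, \<eta>) - dx f (t, \<eta>) = (t + h - t) * dt (dx f) (\<sigma>, \<eta>)"
  proof (rule MVT2)
    fix s assume "t \<le> s" "s \<le> t + h"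
    then have "(s, \<eta>) \<in> \<Omega>" using rect \<eta> by auto
    then show "((\<lambda>s. dx f (s, \<eta>)) has_real_derivative dt (dx f) (s, \<eta>)) (at s)"
      using fx by (auto intro!: dt_has_real_derivative)
  qed (use h in simp)
  then obtain \<sigma> where "t < \<sigma>" "\<sigma> < t + h" "dx f (t+h, \<eta>) - dx f (t, \<eta>) = h * dt (dx f) (\<sigma>, \<eta>)"
    by auto
  with \<eta> show ?thesis
    using that[of \<sigma> \<eta>] by (auto simp: g_def power2_eq_square algebra_simps)
qed

lemma dt_dx_commute:
  fixes f :: "real \<times> real \<Rightarrow> real"
  assumes "open \<Omega>" "z \<in> \<Omega>"
    and f: "\<forall>w\<in>\<Omega>. f differentiable (at w)"
    and ftx: "\<forall>w\<in>\<Omega>. dt f differentiable (at w) \<and> dx f differentiable (at w)"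
    and "isCont (dx (dt f)) z" "isCont (dt (dx f)) z"
  shows "dt (dx f) z = dx (dt f) z"
proof -
  obtain t x where z: "z = (t, x)" by fastforce
  have "\<bar>dt (dx f) z - dx (dt f) z\<bar> < 2 * e" if "e > 0" for e
  proof -
    obtain d0 where "d0 > 0" and d0: "\<And>w. dist w z < d0 \<Longrightarrow> w \<in> \<Omega>"
      using assms(1,2) by (metis dist_commute open_dist)
    obtain d1 where "d1 > 0" and d1: "\<And>w. dist w z < d1 \<Longrightarrow> \<bar>dx (dt f) w - dx (dt f) z\<bar> < e"
      using assms(5) \<open>e > 0\<close> by (metis continuous_at_eps_delta dist_real_def)
    obtain d2 where "d2 > 0" and d2: "\<And>w. dist w z < d2 \<Longrightarrow> \<bar>dt (dx f) w - dt (dx f) z\<bar> < e"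
      using assms(6) \<open>e > 0\<close> by (metis continuous_at_eps_delta dist_real_def)
    define h where "h = min d0 (min d1 d2) / 4"
    have "h > 0" using \<open>d0 > 0\<close> \<open>d1 > 0\<close> \<open>d2 > 0\<close> by (simp add: h_def)
    have near: "dist (s, y) z < min d0 (min d1 d2)" if "(s, y) \<in> {t..t+h} \<times> {x..x+h}" for s y
    proof -
      have "dist (s, y) z \<le> \<bar>s - t\<bar> + \<bar>y - x\<bar>"
        using sqrt_sum_squares_le_sum_abs[of "s - t" "y - x"]
        by (simp add: z dist_Pair_Pair dist_real_def)
      also have "\<dots> \<le> 2 * h" using that \<open>h > 0\<close> by auto
      finally show ?thesis using \<open>h > 0\<close> by (simp add: h_def)
    qed
    then have rect: "{t..t+h} \<times> {x..x+h} \<subseteq> \<Omega>" using d0 by fastforce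
    obtain \<sigma> \<eta> where \<sigma>\<eta>: "(\<sigma>, \<eta>) \<in> {t..t+h} \<times> {x..x+h}"
      and diff1: "f (t+h, x+h) - f (t+h, x) - f (t, x+h) + f (t, x) = h\<^sup>2 * dx (dt f) (\<sigma>, \<eta>)"
      using mixed_difference_dx_dt[OF \<open>h > 0\<close> rect f] ftx by (metis mem_Sigma_iff)
    obtain \<sigma>' \<eta>' where \<sigma>\<eta>': "(\<sigma>', \<eta>') \<in> {t..t+h} \<times> {x..x+h}"
      and diff2: "f (t+h, x+h) - f (t+h, x) - f (t, x+h) + f (t, x) = h\<^sup>2 * dt (dx f) (\<sigma>', \<eta>')"
      using mixed_difference_dt_dx[OF \<open>h > 0\<close> rect f] ftx by (metis mem_Sigma_iff)
    have "dx (dt f) (\<sigma>, \<eta>) = dt (dx f) (\<sigma>', \<eta>')"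
      using diff1 diff2 \<open>h > 0\<close> by simp
    moreover have "\<bar>dx (dt f) (\<sigma>, \<eta>) - dx (dt f) z\<bar> < e" using d1 near[OF \<sigma>\<eta>] by simp
    moreover have "\<bar>dt (dx f) (\<sigma>', \<eta>') - dt (dx f) z\<bar> < e" using d2 near[OF \<sigma>\<eta>'] by simp
    ultimately show ?thesis by linarith
  qed
  from this[of "\<bar>dt (dx f) z - dx (dt f) z\<bar> / 2"] show ?thesis by fastforce
qed

lemma C2_on_dt_dx_commute:
  assumes "open \<Omega>" "z \<in> \<Omega>" "C2_on \<Omega> f"
  shows "dt (dx f) z = dx (dt f) z"
  using assms dt_dx_commute[OF assms(1,2)]
  by (simp add: C2_on_def continuous_on_eq_continuous_at)

lemma frechet_derivative_sfun:
  assumes "p differentiable (at z)" "tau differentiable (at z)" "p z > 0" "tau z > 0" "\<gamma> > 0"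
  shows "sfun \<gamma> tau p differentiable (at z)"
    and "frechet_derivative (sfun \<gamma> tau p) (at z) = (\<lambda>u. \<gamma> * (frechet_derivative p (at z) u * tau z
           - p z * frechet_derivative tau (at z) u) / (tau z)\<^sup>2 / (2 * sfun \<gamma> tau p z))"
proof -
  have "(sfun \<gamma> tau p has_derivative (\<lambda>u. \<gamma> * (frechet_derivative p (at z) u * tau z
           - p z * frechet_derivative tau (at z) u) / (tau z)\<^sup>2 / (2 * sfun \<gamma> tau p z))) (at z)"
    unfolding sfun_def[abs_def] using assms
    by (auto intro!: derivative_eq_intros simp: frechet_derivative_works field_simps power2_eq_square)
  then show "sfun \<gamma> tau p differentiable (at z)"
    and "frechet_derivative (sfun \<gamma> tau p) (at z) = (\<lambda>u. \<gamma> * (frechet_derivative p (at z) u * tau z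
           - p z * frechet_derivative tau (at z) u) / (tau z)\<^sup>2 / (2 * sfun \<gamma> tau p z))"
    by (auto intro: differentiableI frechet_derivative_at[symmetric])
qed

lemma sfun_sound_speed:
  assumes "p z > 0" "tau z > 0" "\<gamma> > 0"
  shows "sfun \<gamma> tau p z > 0"
    and "p z = (sfun \<gamma> tau p z)\<^sup>2 * tau z / \<gamma>"
    and "sqrt (\<gamma> * p z * tau z) = sfun \<gamma> tau p z * tau z"
proof -
  show "sfun \<gamma> tau p z > 0" and "p z = (sfun \<gamma> tau p z)\<^sup>2 * tau z / \<gamma>"
    using assms by (simp_all add: sfun_def)
  have "sqrt (\<gamma> * p z * tau z) = sqrt (\<gamma> * p z / tau z * (tau z)\<^sup>2)"
    using assms by (simp add: power2_eq_square)
  also have "\<dots> = sfun \<gamma> tau p z * tau z"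
    using assms by (simp only: real_sqrt_mult real_sqrt_abs abs_of_pos sfun_def)
  finally show "sqrt (\<gamma> * p z * tau z) = sfun \<gamma> tau p z * tau z" .
qed

lemma frechet_derivative_P:
  assumes "dx v differentiable (at z)" "dx tau differentiable (at z)" "dx p differentiable (at z)"
    and "s differentiable (at z)" "s z \<noteq> 0"
    and s: "s = sfun \<gamma> tau p"
  shows "frechet_derivative (P1 \<gamma> v tau p) (at z) u = frechet_derivative (dx v) (at z) u
           - (frechet_derivative (dx p) (at z) u * s z - dx p z * frechet_derivative s (at z) u) / (s z)\<^sup>2"
    and "frechet_derivative (P2 \<gamma> v tau p) (at z) u = frechet_derivative s (at z) u * dx tau z
           + s z * frechet_derivative (dx tau) (at z) u
           + (frechet_derivative (dx p) (at z) u * s z - dx p z * frechet_derivative s (at z) u) / (s z)\<^sup>2"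
    and "frechet_derivative (P3 \<gamma> v tau p) (at z) u = frechet_derivative (dx v) (at z) u
           + (frechet_derivative (dx p) (at z) u * s z - dx p z * frechet_derivative s (at z) u) / (s z)\<^sup>2"
  using assms unfolding P1_def[abs_def] P2_def[abs_def] P3_def[abs_def] s[symmetric]
  by (simp_all add: frechet_derivative_add_at frechet_derivative_diff_at
      frechet_derivative_mult_at frechet_derivative_divide_at)

lemma solution_dt_dx:
  assumes \<Omega>: "open \<Omega>" "z \<in> \<Omega>"
    and C2: "C2_on \<Omega> v" "C2_on \<Omega> tau" "C2_on \<Omega> p"
    and eq_v: "\<forall>z\<in>\<Omega>. dt v z + v z * dx v z + tau z * dx p z = 0"
    and eq_tau: "\<forall>z\<in>\<Omega>. dt tau z + v z * dx tau z - tau z * dx v z = 0"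
    and eq_p: "\<forall>z\<in>\<Omega>. dt p z + v z * dx p z + \<gamma> * p z * dx v z = 0"
  shows "dt (dx v) z = - (dx v z * dx v z + v z * dx (dx v) z + dx tau z * dx p z + tau z * dx (dx p) z)"
    and "dt (dx tau) z = - (dx v z * dx tau z + v z * dx (dx tau) z - (dx tau z * dx v z + tau z * dx (dx v) z))"
    and "dt (dx p) z = - (dx v z * dx p z + v z * dx (dx p) z + \<gamma> * (dx p z * dx v z + p z * dx (dx v) z))"
proof -
  have diff: "f differentiable (at z)" "dt f differentiable (at z)" "dx f differentiable (at z)"
    if "C2_on \<Omega> f" for f
    using that \<Omega>(2) by (auto simp: C2_on_def)
  \<comment> \<open>\<open>dx\<close> is unfolded at \<open>z\<close> only: the product rules then act on the outer derivative,
    and the inner partials are folded back into \<open>dx\<close>.\<close>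
  note rules = frechet_derivative_add_at frechet_derivative_diff_at frechet_derivative_mult_at
    diff[OF C2(1)] diff[OF C2(2)] diff[OF C2(3)] dx_def[symmetric]
  have "dx (\<lambda>w. dt v w + v w * dx v w + tau w * dx p w) z = 0"
    using frechet_derivative_vanishing_on_open[OF \<Omega> eq_v] by (simp add: dx_def)
  then show "dt (dx v) z = - (dx v z * dx v z + v z * dx (dx v) z + dx tau z * dx p z + tau z * dx (dx p) z)"
    unfolding C2_on_dt_dx_commute[OF \<Omega> C2(1)] dx_def[of _ z] by (simp add: rules)
  have "dx (\<lambda>w. dt tau w + v w * dx tau w - tau w * dx v w) z = 0"
    using frechet_derivative_vanishing_on_open[OF \<Omega> eq_tau] by (simp add: dx_def)
  then show "dt (dx tau) z = - (dx v z * dx tau z + v z * dx (dx tau) z - (dx tau z * dx v z + tau z * dx (dx v) z))"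
    unfolding C2_on_dt_dx_commute[OF \<Omega> C2(2)] dx_def[of _ z] by (simp add: rules)
  have "dx (\<lambda>w. dt p w + v w * dx p w + \<gamma> * p w * dx v w) z = 0"
    using frechet_derivative_vanishing_on_open[OF \<Omega> eq_p] by (simp add: dx_def)
  then show "dt (dx p) z = - (dx v z * dx p z + v z * dx (dx p) z + \<gamma> * (dx p z * dx v z + p z * dx (dx v) z))"
    unfolding C2_on_dt_dx_commute[OF \<Omega> C2(3)] dx_def[of _ z] by (simp add: rules algebra_simps)
qed

lemma characteristic_identities:
  fixes \<gamma> v vx vxx vt vxt T Tx Txx Tt Txt p px pxx pt pxt s st sx :: real
  assumes nz: "T \<noteq> 0" "s \<noteq> 0" "\<gamma> \<noteq> 0" and p: "p = s\<^sup>2 * T / \<gamma>"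
    and eq_v: "vt + v * vx + T * px = 0"
    and eq_T: "Tt + v * Tx - T * vx = 0"
    and eq_p: "pt + v * px + \<gamma> * p * vx = 0"
    and vxt: "vxt = - (vx * vx + v * vxx + Tx * px + T * pxx)"
    and Txt: "Txt = - (vx * Tx + v * Txx - (Tx * vx + T * vxx))"
    and pxt: "pxt = - (vx * px + v * pxx + \<gamma> * (px * vx + p * vxx))"
    and st: "st = \<gamma> * (pt * T - p * Tt) / T\<^sup>2 / (2 * s)"
    and sx: "sx = \<gamma> * (px * T - p * Tx) / T\<^sup>2 / (2 * s)"
  shows "(vxt - (pxt * s - px * st) / s\<^sup>2) + (v - s * T) * (vxx - (pxx * s - px * sx) / s\<^sup>2)
           = F1 \<gamma> (vx - px / s) (s * Tx + px / s) (vx + px / s)"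
    and "(st * Tx + s * Txt + (pxt * s - px * st) / s\<^sup>2) + v * (sx * Tx + s * Txx + (pxx * s - px * sx) / s\<^sup>2)
           = F2 \<gamma> (vx - px / s) (s * Tx + px / s) (vx + px / s)"
    and "(vxt + (pxt * s - px * st) / s\<^sup>2) + (v + s * T) * (vxx + (pxx * s - px * sx) / s\<^sup>2)
           = F3 \<gamma> (vx - px / s) (s * Tx + px / s) (vx + px / s)"
proof -
  have vt: "vt = - (v * vx) - T * px" and Tt: "Tt = - (v * Tx) + T * vx"
    and pt: "pt = - (v * px) - \<gamma> * p * vx"
    using eq_v eq_T eq_p by linarith+
  note substitutions = st sx vt Tt pt vxt Txt pxt p F1_def F2_def F3_def
  show "(vxt - (pxt * s - px * st) / s\<^sup>2) + (v - s * T) * (vxx - (pxx * s - px * sx) / s\<^sup>2)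
           = F1 \<gamma> (vx - px / s) (s * Tx + px / s) (vx + px / s)"
    unfolding substitutions using nz by (simp add: field_simps) algebra
  show "(st * Tx + s * Txt + (pxt * s - px * st) / s\<^sup>2) + v * (sx * Tx + s * Txx + (pxx * s - px * sx) / s\<^sup>2)
           = F2 \<gamma> (vx - px / s) (s * Tx + px / s) (vx + px / s)"
    unfolding substitutions using nz by (simp add: field_simps) algebra
  show "(vxt + (pxt * s - px * st) / s\<^sup>2) + (v + s * T) * (vxx + (pxx * s - px * sx) / s\<^sup>2)
           = F3 \<gamma> (vx - px / s) (s * Tx + px / s) (vx + px / s)"
    unfolding substitutions using nz by (simp add: field_simps) algebra
qed

theorem mainTheorem3:
  fixes \<gamma> :: real and \<Omega> :: "(real \<times> real) set"
    and v tau p :: "real \<times> real \<Rightarrow> real"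
  assumes "\<gamma> > 1" and "open \<Omega>"
    and "C2_on \<Omega> v" and "C2_on \<Omega> tau" and "C2_on \<Omega> p"
    and "\<forall>z\<in>\<Omega>. tau z > 0" and "\<forall>z\<in>\<Omega>. p z > 0"
    and "\<forall>z\<in>\<Omega>. dt v z + v z * dx v z + tau z * dx p z = 0"
    and "\<forall>z\<in>\<Omega>. dt tau z + v z * dx tau z - tau z * dx v z = 0"
    and "\<forall>z\<in>\<Omega>. dt p z + v z * dx p z + \<gamma> * p z * dx v z = 0"
  shows "\<forall>z\<in>\<Omega>.
     dt (P1 \<gamma> v tau p) z + xi1 \<gamma> v tau p z * dx (P1 \<gamma> v tau p) z
       = F1 \<gamma> (P1 \<gamma> v tau p z) (P2 \<gamma> v tau p z) (P3 \<gamma> v tau p z) \<and>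
     dt (P2 \<gamma> v tau p) z + xi2 \<gamma> v tau p z * dx (P2 \<gamma> v tau p) z
       = F2 \<gamma> (P1 \<gamma> v tau p z) (P2 \<gamma> v tau p z) (P3 \<gamma> v tau p z) \<and>
     dt (P3 \<gamma> v tau p) z + xi3 \<gamma> v tau p z * dx (P3 \<gamma> v tau p) z
       = F3 \<gamma> (P1 \<gamma> v tau p z) (P2 \<gamma> v tau p z) (P3 \<gamma> v tau p z)"
proof
  fix z assume z: "z \<in> \<Omega>"
  define s where "s = sfun \<gamma> tau p"
  have diff: "f differentiable (at z)" "dx f differentiable (at z)" if "C2_on \<Omega> f" for f
    using that z by (auto simp: C2_on_def)
  have pos: "p z > 0" "tau z > 0" "\<gamma> > 0" using assms(1,6,7) z by auto
  note s = sfun_sound_speed[where p = p and tau = tau and z = z, OF pos, folded s_def]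
  have s': "s differentiable (at z)"
    "dt s z = \<gamma> * (dt p z * tau z - p z * dt tau z) / (tau z)\<^sup>2 / (2 * s z)"
    "dx s z = \<gamma> * (dx p z * tau z - p z * dx tau z) / (tau z)\<^sup>2 / (2 * s z)"
    using frechet_derivative_sfun[OF diff(1)[OF assms(5)] diff(1)[OF assms(4)] pos]
    by (simp_all add: s_def dt_def dx_def)
  note identities = characteristic_identities[OF _ _ _ s(2) assms(8-10)[rule_format, OF z]
      solution_dt_dx[OF assms(2) z assms(3-5,8-10)] s'(2,3)]
  note partials = frechet_derivative_P[OF diff(2)[OF assms(3)] diff(2)[OF assms(4)]
      diff(2)[OF assms(5)] s'(1) _ s_def]
  show "dt (P1 \<gamma> v tau p) z + xi1 \<gamma> v tau p z * dx (P1 \<gamma> v tau p) z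
       = F1 \<gamma> (P1 \<gamma> v tau p z) (P2 \<gamma> v tau p z) (P3 \<gamma> v tau p z) \<and>
     dt (P2 \<gamma> v tau p) z + xi2 \<gamma> v tau p z * dx (P2 \<gamma> v tau p) z
       = F2 \<gamma> (P1 \<gamma> v tau p z) (P2 \<gamma> v tau p z) (P3 \<gamma> v tau p z) \<and>
     dt (P3 \<gamma> v tau p) z + xi3 \<gamma> v tau p z * dx (P3 \<gamma> v tau p) z
       = F3 \<gamma> (P1 \<gamma> v tau p z) (P2 \<gamma> v tau p z) (P3 \<gamma> v tau p z)"
    using identities partials pos s(1) s(3)
    by (simp add: dt_def dx_def xi1_def xi2_def xi3_def P1_def P2_def P3_def s_def[symmetric])
qed

end
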